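(* Let $K'\subset K\subset\mathbb{R}^n$, $\delta>0$, $\sigma>0$, and let $\nu_1,\dots,\nu_M\in K'$ be a maximal $\delta$-packing of $K'$ (i.e. $\|\nu_i-\nu_j\|\ge\delta$ for $i\ne j$ and no further point of $K'$ can be added). Suppose $\mu\in K'$ and $Y=\mu+\xi$ with $\xi\sim N(0,\sigma^2\mathbb{I}_n)$, and let $i^*\in\arg\min_i\|Y-\nu_i\|$. Then for any fixed $C>2$, $$\mathbb{P}(\|\nu_{i^*}-\mu\|>(C+1)\delta)\le M\exp\big(-(C-2)^2\delta^2/(8\sigma^2)\big).$$
   Context: $\|\cdot\|$ is the Euclidean norm. *)

theory Defs
  imports "HOL-Probability.Probability"
begin

definition gaussian_iso :: "real \<Rightarrow> (real ^ 'n) measure" where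
  "gaussian_iso \<sigma> = density lborel
     (\<lambda>x. ennreal ((2 * pi * \<sigma>\<^sup>2) powr (- real CARD('n) / 2)
                    * exp (- (norm x)\<^sup>2 / (2 * \<sigma>\<^sup>2))))"

definition maximal_packing :: "('a::metric_space) set \<Rightarrow> real \<Rightarrow> nat \<Rightarrow> (nat \<Rightarrow> 'a) \<Rightarrow> bool" where
  "maximal_packing S \<delta> M \<nu> \<longleftrightarrow>
     (\<forall>i<M. \<nu> i \<in> S) \<and>
     (\<forall>i<M. \<forall>j<M. i \<noteq> j \<longrightarrow> dist (\<nu> i) (\<nu> j) \<ge> \<delta>) \<and>
     (\<forall>x\<in>S. \<exists>i<M. dist x (\<nu> i) < \<delta>)"

end

theory Submission
  imports Defs
begin

text \<open>The packing contains a point \<open>\<nu> j\<close> within \<open>\<delta>\<close> of \<open>\<mu>\<close>. If the nearest point \<open>\<nu> i\<close>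
  lies farther than \<open>(C + 1) * \<delta>\<close> from \<open>\<mu>\<close>, then the noise \<open>\<xi>\<close> is at least as close to
  \<open>a = \<nu> i - \<mu>\<close> as to \<open>b = \<nu> j - \<mu>\<close>, and \<open>t = norm a - norm b \<ge> C * \<delta>\<close>. This half-space lies
  in \<open>{x. (norm (x - c))\<^sup>2 + t\<^sup>2 / 4 \<le> (norm x)\<^sup>2}\<close> for a suitable \<open>c\<close>, where the Gaussian density
  is at most \<open>exp (- t\<^sup>2 / (8 * \<sigma>\<^sup>2))\<close> times its translate by \<open>c\<close>; so the half-space has
  probability at most that factor. A union bound over the at most \<open>M\<close> far indices concludes.\<close>

lemma norm_diff_mult_norm_diff_le:
  fixes a b :: "'a::real_normed_vector"
  shows "(norm a - norm b)\<^sup>2 * (norm (a - b))\<^sup>2 \<le> ((norm a)\<^sup>2 - (norm b)\<^sup>2)\<^sup>2"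
proof -
  have "\<bar>norm a - norm b\<bar> * norm (a - b) \<le> \<bar>norm a - norm b\<bar> * (norm a + norm b)"
    by (intro mult_left_mono norm_triangle_ineq4) simp
  then have "(\<bar>norm a - norm b\<bar> * norm (a - b))\<^sup>2 \<le> (\<bar>norm a - norm b\<bar> * (norm a + norm b))\<^sup>2"
    by (intro power_mono) simp_all
  then show ?thesis
    by (simp add: power2_eq_square algebra_simps)
qed

lemma closer_halfspace_subset_shifted:
  fixes a b :: "'a::real_inner"
  assumes "norm b \<le> norm a"
  obtains c where "\<And>x. norm (x - a) \<le> norm (x - b) \<Longrightarrow>
                      (norm (x - c))\<^sup>2 + (norm a - norm b)\<^sup>2 / 4 \<le> (norm x)\<^sup>2"
proof (cases "a = b")
  case True
  then show ?thesis by (intro that[of 0]) simp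
next
  case False
  define D where "D = (norm a)\<^sup>2 - (norm b)\<^sup>2"
  \<comment> \<open>\<open>l\<close> minimises the quadratic bound below over the multiples of \<open>a - b\<close>.\<close>
  define l where "l = D / (2 * (norm (a - b))\<^sup>2)"
  have "D \<ge> 0" unfolding D_def using assms by (simp add: power_mono)
  then have "l \<ge> 0" unfolding l_def by simp
  have ab: "norm (a - b) > 0" using False by simp
  have norm_diff_sq: "(norm (x - y))\<^sup>2 = (norm x)\<^sup>2 - 2 * (x \<bullet> y) + (norm y)\<^sup>2" for x y :: 'a
    by (simp add: power2_norm_eq_inner inner_diff_left inner_diff_right inner_commute)
  show ?thesis
  proof (rule that)
    fix x assume "norm (x - a) \<le> norm (x - b)"
    then have "(norm (x - a))\<^sup>2 \<le> (norm (x - b))\<^sup>2" by (simp add: power_mono)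
    then have "D \<le> 2 * (x \<bullet> (a - b))"
      unfolding D_def norm_diff_sq by (simp add: inner_diff_right)
    have "(norm (x - l *\<^sub>R (a - b)))\<^sup>2 = (norm x)\<^sup>2 - 2 * l * (x \<bullet> (a - b)) + l\<^sup>2 * (norm (a - b))\<^sup>2"
      unfolding norm_diff_sq[of x] by (simp add: power_mult_distrib)
    also have "\<dots> \<le> (norm x)\<^sup>2 - l * D + l\<^sup>2 * (norm (a - b))\<^sup>2"
      using mult_left_mono[OF \<open>D \<le> _\<close> \<open>l \<ge> 0\<close>] by simp
    also have "\<dots> = (norm x)\<^sup>2 - D\<^sup>2 / (4 * (norm (a - b))\<^sup>2)"
      unfolding l_def using ab by (simp add: field_simps power2_eq_square)
    also have "\<dots> \<le> (norm x)\<^sup>2 - (norm a - norm b)\<^sup>2 / 4"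
      using norm_diff_mult_norm_diff_le[of a b] ab unfolding D_def by (simp add: field_simps)
    finally show "(norm (x - l *\<^sub>R (a - b)))\<^sup>2 + (norm a - norm b)\<^sup>2 / 4 \<le> (norm x)\<^sup>2"
      by simp
  qed
qed

lemma gaussian_iso_density_eq_prod_normal_density:
  fixes x :: "real ^ 'n"
  assumes "\<sigma> > 0"
  shows "(2 * pi * \<sigma>\<^sup>2) powr (- real CARD('n) / 2) * exp (- (norm x)\<^sup>2 / (2 * \<sigma>\<^sup>2))
     = (\<Prod>b\<in>Basis. normal_density 0 \<sigma> (x \<bullet> b))"
proof -
  have pos: "2 * pi * \<sigma>\<^sup>2 > 0" using assms by simp
  have "(norm x)\<^sup>2 = (\<Sum>b\<in>Basis. (x \<bullet> b)\<^sup>2)"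
    unfolding power2_norm_eq_inner by (subst euclidean_inner) (simp add: power2_eq_square)
  then have "- (norm x)\<^sup>2 / (2 * \<sigma>\<^sup>2) = (\<Sum>b\<in>Basis. - (x \<bullet> b)\<^sup>2 / (2 * \<sigma>\<^sup>2))"
    by (simp only: sum_divide_distrib[symmetric] sum_negf)
  then have exp_eq: "exp (- (norm x)\<^sup>2 / (2 * \<sigma>\<^sup>2)) = (\<Prod>b\<in>Basis. exp (- (x \<bullet> b)\<^sup>2 / (2 * \<sigma>\<^sup>2)))"
    by (simp add: exp_sum)
  have "(2 * pi * \<sigma>\<^sup>2) powr (- real CARD('n) / 2) = ((2 * pi * \<sigma>\<^sup>2) powr (- 1 / 2)) powr real CARD('n)"
    by (simp add: powr_powr)
  also have "\<dots> = ((2 * pi * \<sigma>\<^sup>2) powr (- 1 / 2)) ^ CARD('n)"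
    using assms by (intro powr_realpow) simp
  also have "\<dots> = (\<Prod>b\<in>(Basis :: (real ^ 'n) set). 1 / sqrt (2 * pi * \<sigma>\<^sup>2))"
    using pos by (simp add: powr_minus_divide powr_half_sqrt[symmetric])
  finally show ?thesis
    unfolding exp_eq normal_density_def diff_zero prod.distrib by simp
qed

lemma sets_gaussian_iso [simp, measurable_cong]:
  "sets (gaussian_iso \<sigma> :: (real ^ 'n) measure) = sets borel"
  unfolding gaussian_iso_def by simp

lemma gaussian_iso_eq_density_prod_normal:
  assumes "\<sigma> > 0"
  shows "gaussian_iso \<sigma> =
           density lborel (\<lambda>x :: real ^ 'n. \<Prod>b\<in>Basis. ennreal (normal_density 0 \<sigma> (x \<bullet> b)))"
  unfolding gaussian_iso_def gaussian_iso_density_eq_prod_normal_density[OF assms]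
  by (intro arg_cong[where f = "density lborel"] ext prod_ennreal[symmetric] normal_density_nonneg)

lemma prob_space_gaussian_iso:
  assumes "\<sigma> > 0"
  shows "prob_space (gaussian_iso \<sigma> :: (real ^ 'n) measure)"
proof
  have "emeasure (gaussian_iso \<sigma> :: (real ^ 'n) measure) (space (gaussian_iso \<sigma>))
      = (\<integral>\<^sup>+x. (\<Prod>b\<in>Basis. ennreal (normal_density 0 \<sigma> (x \<bullet> b))) \<partial>(lborel :: (real ^ 'n) measure))"
    by (simp add: gaussian_iso_eq_density_prod_normal[OF assms] emeasure_density)
  also have "\<dots> = (\<Prod>b\<in>(Basis :: (real ^ 'n) set). \<integral>\<^sup>+x. ennreal (normal_density 0 \<sigma> x) \<partial>lborel)"
    by (rule nn_integral_lborel_prod) auto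
  also have "(\<integral>\<^sup>+x. ennreal (normal_density 0 \<sigma> x) \<partial>lborel) = 1"
    by (subst nn_integral_eq_integral)
       (simp_all add: integrable_normal_density[OF assms] integral_normal_density[OF assms])
  finally show "emeasure (gaussian_iso \<sigma> :: (real ^ 'n) measure) (space (gaussian_iso \<sigma>)) = 1"
    by simp
qed

lemma emeasure_gaussian_iso_shift_le:
  fixes c :: "real ^ 'n"
  assumes "\<sigma> > 0"
  shows "emeasure (gaussian_iso \<sigma>) {x. (norm (x - c))\<^sup>2 + r \<le> (norm x)\<^sup>2}
           \<le> ennreal (exp (- r / (2 * \<sigma>\<^sup>2)))"
proof -
  define k where "k = (2 * pi * \<sigma>\<^sup>2) powr (- real CARD('n) / 2)"
  define g :: "real ^ 'n \<Rightarrow> ennreal"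
    where "g x = ennreal (k * exp (- (norm x)\<^sup>2 / (2 * \<sigma>\<^sup>2)))" for x
  define A where "A = {x :: real ^ 'n. (norm (x - c))\<^sup>2 + r \<le> (norm x)\<^sup>2}"
  have gaussian_eq: "gaussian_iso \<sigma> = density lborel g"
    unfolding gaussian_iso_def g_def k_def ..
  have [measurable]: "g \<in> borel_measurable borel"
    unfolding g_def by (intro measurable_compose[OF _ measurable_ennreal])
      (auto intro!: borel_measurable_continuous_onI continuous_intros)
  have [measurable]: "A \<in> sets borel"
    unfolding A_def by measurable
  have "k \<ge> 0" unfolding k_def by simp
  have "(\<integral>\<^sup>+x. g x \<partial>lborel) = emeasure (gaussian_iso \<sigma>) (space (gaussian_iso \<sigma> :: (real ^ 'n) measure))"
    by (simp add: gaussian_eq emeasure_density)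
  also have "\<dots> = 1"
    by (intro prob_space.emeasure_space_1 prob_space_gaussian_iso assms)
  finally have total: "(\<integral>\<^sup>+x. g x \<partial>lborel) = 1" .
  have density_le: "g x * indicator A x \<le> ennreal (exp (- r / (2 * \<sigma>\<^sup>2))) * g (x - c)" for x
  proof (cases "x \<in> A")
    case True
    then have "- (norm x)\<^sup>2 / (2 * \<sigma>\<^sup>2) \<le> - r / (2 * \<sigma>\<^sup>2) + - (norm (x - c))\<^sup>2 / (2 * \<sigma>\<^sup>2)"
      using assms by (simp add: A_def field_simps)
    then have "exp (- (norm x)\<^sup>2 / (2 * \<sigma>\<^sup>2))
        \<le> exp (- r / (2 * \<sigma>\<^sup>2)) * exp (- (norm (x - c))\<^sup>2 / (2 * \<sigma>\<^sup>2))"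
      by (simp add: exp_add[symmetric])
    then have "k * exp (- (norm x)\<^sup>2 / (2 * \<sigma>\<^sup>2))
        \<le> exp (- r / (2 * \<sigma>\<^sup>2)) * (k * exp (- (norm (x - c))\<^sup>2 / (2 * \<sigma>\<^sup>2)))"
      using \<open>k \<ge> 0\<close> by (metis mult.left_commute mult_left_mono)
    then show ?thesis
      using True \<open>k \<ge> 0\<close> by (simp add: g_def ennreal_mult''[symmetric] ennreal_leI)
  qed simp
  have translate: "(\<integral>\<^sup>+x. g (x - c) \<partial>lborel) = (\<integral>\<^sup>+x. g x \<partial>lborel)"
  proof -
    have "(\<integral>\<^sup>+x. g x \<partial>lborel) = (\<integral>\<^sup>+x. g x \<partial>distr lborel borel ((+) (- c)))"
      by (simp add: lborel_distr_plus)
    also have "\<dots> = (\<integral>\<^sup>+x. g (- c + x) \<partial>lborel)"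
      by (rule nn_integral_distr) auto
    finally show ?thesis by simp
  qed
  have "emeasure (gaussian_iso \<sigma>) A = (\<integral>\<^sup>+x. g x * indicator A x \<partial>lborel)"
    by (simp add: gaussian_eq emeasure_density)
  also have "\<dots> \<le> (\<integral>\<^sup>+x. ennreal (exp (- r / (2 * \<sigma>\<^sup>2))) * g (x - c) \<partial>lborel)"
    by (intro nn_integral_mono density_le)
  also have "\<dots> = ennreal (exp (- r / (2 * \<sigma>\<^sup>2)))"
    by (simp add: nn_integral_cmult translate total)
  finally show ?thesis unfolding A_def .
qed

lemma measure_gaussian_iso_closer_le:
  fixes a b :: "real ^ 'n"
  assumes "\<sigma> > 0" and "0 \<le> t" and "t \<le> norm a - norm b"
  shows "measure (gaussian_iso \<sigma>) {x. norm (x - a) \<le> norm (x - b)} \<le> exp (- t\<^sup>2 / (8 * \<sigma>\<^sup>2))"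
proof -
  interpret prob_space "gaussian_iso \<sigma> :: (real ^ 'n) measure"
    by (rule prob_space_gaussian_iso) fact
  have "norm b \<le> norm a" using assms(2,3) by simp
  then obtain c where c: "\<And>x. norm (x - a) \<le> norm (x - b) \<Longrightarrow>
                      (norm (x - c))\<^sup>2 + (norm a - norm b)\<^sup>2 / 4 \<le> (norm x)\<^sup>2"
    using closer_halfspace_subset_shifted by blast
  have "measure (gaussian_iso \<sigma>) {x. norm (x - a) \<le> norm (x - b)}
      \<le> measure (gaussian_iso \<sigma>) {x. (norm (x - c))\<^sup>2 + (norm a - norm b)\<^sup>2 / 4 \<le> (norm x)\<^sup>2}"
    using c by (intro finite_measure_mono) auto
  also have "\<dots> \<le> exp (- ((norm a - norm b)\<^sup>2 / 4) / (2 * \<sigma>\<^sup>2))"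
    using emeasure_gaussian_iso_shift_le[OF assms(1), of c "(norm a - norm b)\<^sup>2 / 4"]
    by (simp add: emeasure_eq_measure)
  also have "\<dots> \<le> exp (- t\<^sup>2 / (8 * \<sigma>\<^sup>2))"
    using assms by (auto simp: divide_right_mono intro!: power_mono)
  finally show ?thesis .
qed

lemma (in finite_measure) finite_measure_le_card_mult_if_covered:
  fixes B :: real
  assumes "finite I" and "A ` I \<subseteq> sets M" and "S \<subseteq> (\<Union>i\<in>I. A i)"
    and "\<And>i. i \<in> I \<Longrightarrow> measure M (A i) \<le> B"
  shows "measure M S \<le> card I * B"
proof -
  have "measure M S \<le> measure M (\<Union>i\<in>I. A i)"
    using assms(1-3) by (intro finite_measure_mono) auto
  also have "\<dots> \<le> (\<Sum>i\<in>I. measure M (A i))"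
    using assms(1,2) by (rule finite_measure_subadditive_finite)
  also have "\<dots> \<le> card I * B"
    using assms(4) by (rule sum_bounded_above)
  finally show ?thesis .
qed

theorem mainTheorem6:
  fixes K K' :: "(real ^ 'n) set" and \<delta> \<sigma> C :: real and M :: nat
    and \<nu> :: "nat \<Rightarrow> real ^ 'n" and \<mu> :: "real ^ 'n"
    and istar :: "real ^ 'n \<Rightarrow> nat"
  assumes "K' \<subseteq> K" and "\<delta> > 0" and "\<sigma> > 0"
    and "maximal_packing K' \<delta> M \<nu>"
    and "\<mu> \<in> K'"
    and "\<And>y. istar y < M"
    and "\<And>y j. j < M \<Longrightarrow> norm (y - \<nu> (istar y)) \<le> norm (y - \<nu> j)"
    and "istar \<in> borel_measurable borel"
    and "C > 2"
  shows "measure (gaussian_iso \<sigma>) {\<xi>. norm (\<nu> (istar (\<mu> + \<xi>)) - \<mu>) > (C + 1) * \<delta>}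
           \<le> M * exp (- (C - 2)\<^sup>2 * \<delta>\<^sup>2 / (8 * \<sigma>\<^sup>2))"
proof -
  interpret prob_space "gaussian_iso \<sigma> :: (real ^ 'n) measure"
    by (rule prob_space_gaussian_iso) fact
  obtain j where "j < M" and near: "norm (\<nu> j - \<mu>) < \<delta>"
    using assms(4,5) by (auto simp: maximal_packing_def dist_norm norm_minus_commute)
  define I where "I = {i. i < M \<and> (C + 1) * \<delta> < norm (\<nu> i - \<mu>)}"
  define closer where "closer i = {\<xi>. norm (\<xi> - (\<nu> i - \<mu>)) \<le> norm (\<xi> - (\<nu> j - \<mu>))}" for i
  have cover: "{\<xi>. norm (\<nu> (istar (\<mu> + \<xi>)) - \<mu>) > (C + 1) * \<delta>} \<subseteq> (\<Union>i\<in>I. closer i)"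
    using assms(6) assms(7)[OF \<open>j < M\<close>] by (force simp: I_def closer_def algebra_simps)
  have "measure (gaussian_iso \<sigma>) (closer i) \<le> exp (- ((C - 2) * \<delta>)\<^sup>2 / (8 * \<sigma>\<^sup>2))"
    if "i \<in> I" for i
    unfolding closer_def using that near assms(2,3,9)
    by (intro measure_gaussian_iso_closer_le) (auto simp: I_def algebra_simps)
  \<comment> \<open>Only the covering sets must be measurable.\<close>
  then have "measure (gaussian_iso \<sigma>) {\<xi>. norm (\<nu> (istar (\<mu> + \<xi>)) - \<mu>) > (C + 1) * \<delta>}
      \<le> card I * exp (- ((C - 2) * \<delta>)\<^sup>2 / (8 * \<sigma>\<^sup>2))"
    using cover by (intro finite_measure_le_card_mult_if_covered) (auto simp: I_def closer_def)
  also have "\<dots> \<le> M * exp (- ((C - 2) * \<delta>)\<^sup>2 / (8 * \<sigma>\<^sup>2))"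
    using card_mono[of "{..<M}" I] by (auto simp: I_def intro!: mult_right_mono)
  finally show ?thesis by (simp add: power_mult_distrib)
qed

end
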